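(* In the tracking setting, fix $k\geq0$. If $\|s_{k+1}-s_k\|_2<r_B$, $\|\bar w_k-w^\ast_k\|_2<q_B\rho$ and $$\Big(1+\frac{\lambda_H\lambda_B}{\rho}\Big)\|\bar w_k-w^\ast_k\|_2+\lambda_H\lambda_B r_B<\delta,$$ then $$\|\bar w_{k+1}-w^\infty_k\|_2\leq C(1+\rho\lambda_G)M^{-\psi}\Big(\lambda_B\lambda_H\|s_{k+1}-s_k\|_2+\Big(1+\frac{\lambda_B\lambda_H}{\rho}\Big)\|\bar w_k-w^\ast_k\|_2\Big).$$
   Context: Problem data: $z=(z_1,\dots,z_P)\in\mathbb{R}^{n_z}$; $\mathcal{Z}=\mathcal{Z}_1\times\cdots\times\mathcal{Z}_P$ a product of nonempty bounded boxes; $J(z)=\sum_iJ_i(z_i)$ with polynomials $J_i$; polynomial maps $Q_c:\mathbb{R}^{n_z}\to\mathbb{R}^m$, $g_i:\mathbb{R}^{n_i}\to\mathbb{R}^{q_i}$; $T_i\in\mathbb{R}^{q_i\times p}$; $q=\sum q_i$; $\mathcal{S}\subseteq\mathbb{R}^p$; $G(z,s)=(Q_c(z),g_1(z_1)+T_1s,\dots,g_P(z_P)+T_Ps)$; $L_\rho(z,\mu,s)=J(z)+(\mu+\frac\rho2G(z,s))^\top G(z,s)$; for $w=(z,\mu)$, $F(w,s)=(\nabla J(z)+\nabla_zG(z,s)^\top\mu,\ G(z,s))$; $\mathcal{N}:=\mathcal{N}_{\mathcal{Z}\times\mathbb{R}^{m+q}}$. A KKT point of $(P_s)$: $\min J(z)$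 s.t. $G(z,s)=0$, $z\in\mathcal{Z}$, is $w$ with $0\in F(w,s)+\mathcal{N}(w)$. For a reference multiplier $\tilde\mu$: $H^{\tilde\mu}_\rho(w,d,s):=(\nabla J(z)+\nabla_zG(z,s)^\top\mu,\ G(z,s)+d+(\tilde\mu-\mu)/\rho)$. Constants: $\lambda_F:=P\max_i\|T_i\|_2$; $\lambda_H>0$ with $\|H^{\tilde\mu}_\rho(w,d,s)-H^{\tilde\mu}_\rho(w,d',s')\|\le\lambda_H\|(d,s)-(d',s')\|$ for all arguments; $\lambda_G>0$ a Lipschitz constant of $z\mapsto G(z,s)$ on $\mathcal{Z}$ (independent of $s$). Primal sweep on $L_\rho(\cdot,\mu,s)$: block-coordinate projected-gradient pass over $i=1,\dots,P$ in order, each block update $z_i\leftarrow\pi_{\mathcal{Z}_i}(z_i-\frac1{c_i}\nabla_{z_i}L_\rho)$ (gradient evaluated with already updated preceding blocks) with curvature $c_i$ obtained by backtracking (multiply by $\beta>1$ from an initial $c_i^0>0$) until $f(u)+\frac{\alpha_i}2\|u-z_i\|^2\le f(z_i)+\nabla f(z_i)^\top(u-z_i)+\frac{c_i}2\|u-z_i\|^2$ for the block function $f$, with $\alpha_i>0$. Tracking setting: fix $\rho>0$, $M\ge1$. Given parameters $(s_k)_{k\ge0}\subset\mathcal{S}$ and KKT points $w^\ast_k=(z^\ast_k,\mu^\ast_k)$ of $(P_{s_k})$. Iterates $\bar w_k=(\bar z_k,\bar\mu_k)$ with $\bar z_k\in\mathcal{Z}$ are produced by: $\bar z_{k+1}$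 = result of $M$ successive primal sweeps on $L_\rho(\cdot,\bar\mu_k,s_{k+1})$ started at $\bar z_k$; $\bar\mu_{k+1}=\bar\mu_k+\rho G(\bar z_{k+1},s_{k+1})$. Let $z^\infty_k$ be the limit of infinitely many sweeps on $L_\rho(\cdot,\bar\mu_k,s_{k+1})$ started at $\bar z_k$, and $w^\infty_k:=(z^\infty_k,\ \bar\mu_k+\rho G(z^\infty_k,s_{k+1}))$; $d_k:=(\bar\mu_k-\mu^\ast_k)/\rho$. Standing hypotheses, for every $k$: (A) there are constants $r_A,\delta_A,\lambda_A>0$ (independent of $k$) such that for every $s\in\mathcal{B}(s_k,r_A)\cap\mathcal{S}$ there is a unique $w^\ast(s)\in\mathcal{B}(w^\ast_k,\delta_A)$ with $0\in F(w^\ast(s),s)+\mathcal{N}(w^\ast(s))$, for all $s,s'\in\mathcal{B}(s_k,r_A)\cap\mathcal{S}$ one has $\|w^\ast(s)-w^\ast(s')\|\le\lambda_A\|F(w^\ast(s'),s)-F(w^\ast(s'),s')\|$, and $w^\ast_{k+1}=w^\ast(s_{k+1})$ whenever $\|s_{k+1}-s_k\|<r_A$; (B) there are constants $r_B,q_B,\lambda_B>0$ and $\delta_B\ge\delta_A$ (independent of $k$) such that for all $d\in\mathcal{B}(0,q_B)$, $s\in\mathcal{B}(s_k,r_B)\cap\mathcal{S}$ there is a unique $w^\ast_k(d,s)\in\mathcal{B}(w^\ast_k,\delta_B)$ with $0\in H^{\mu^\ast_k}_\rho(w^\ast_k(d,s),d,s)+\mathcal{N}(w^\ast_k(d,s))$,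 and $\|w^\ast_k(d,s)-w^\ast_k(d',s')\|\le\lambda_B\|H^{\mu^\ast_k}_\rho(w^\ast_k(d',s'),d,s)-H^{\mu^\ast_k}_\rho(w^\ast_k(d',s'),d',s')\|$ for all such $d,d',s,s'$; (C) there are constants $C>0$, $\delta>0$, $\psi>0$ (independent of $k$) such that the sequence of sweeps defining $z^\infty_k$ converges, $w^\infty_k=w^\ast_k(d_k,s_{k+1})$ whenever $d_k\in\mathcal{B}(0,q_B)$ and $\|s_{k+1}-s_k\|<r_B$, and if $\|\bar z_k-z^\infty_k\|<\delta$ then $\|\bar z_{k+1}-z^\infty_k\|\le CM^{-\psi}\|\bar z_k-z^\infty_k\|$. (In the paper, $\psi=\psi(d_L,n_z)=1/(d_L(3d_L-3)^{n_z-1}-2)$ with $d_L$ the degree of the augmented Lagrangian.) *)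

theory Defs
  imports "HOL-Analysis.Analysis"
begin

text \<open>Block structure: coordinates of z in R^{n_z} (index type 'n) are partitioned into
  blocks 0..P-1 by blk; constraint coordinates (index type 'c, total m+q) are partitioned
  by cblk: cblk c = 0 for the m components of Q_c, cblk c = i+1 for the q_i components of
  g_i(z_i) + T_i s.\<close>

definition blockproj :: "('n::finite \<Rightarrow> nat) \<Rightarrow> nat \<Rightarrow> real^'n \<Rightarrow> real^'n" where
  "blockproj blk i z = (\<chi> j. if blk j = i then z$j else 0)"

definition grad :: "(real^'n::finite \<Rightarrow> real) \<Rightarrow> real^'n \<Rightarrow> real^'n" where
  "grad f z = (\<chi> j. frechet_derivative f (at z) (axis j 1))"

definition normal_cone :: "'a::real_inner set \<Rightarrow> 'a \<Rightarrow> 'a set" where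
  "normal_cone X x = (if x \<in> X then {v. \<forall>y\<in>X. inner v (y - x) \<le> 0} else {})"

definition Gmap :: "(real^'n::finite \<Rightarrow> real^'c::finite) \<Rightarrow> (nat \<Rightarrow> real^'n \<Rightarrow> real^'c)
    \<Rightarrow> (nat \<Rightarrow> real^'p::finite^'c) \<Rightarrow> ('n \<Rightarrow> nat) \<Rightarrow> ('c \<Rightarrow> nat)
    \<Rightarrow> real^'n \<Rightarrow> real^'p \<Rightarrow> real^'c" where
  "Gmap Qc g T blk cblk z s =
     (\<chi> c. if cblk c = 0 then Qc z $ c
           else (g (cblk c - 1) (blockproj blk (cblk c - 1) z) + T (cblk c - 1) *v s) $ c)"

definition Lagr :: "(real^'n::finite \<Rightarrow> real) \<Rightarrow> (real^'n \<Rightarrow> real^'p \<Rightarrow> real^'c::finite)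
    \<Rightarrow> real \<Rightarrow> real^'n \<Rightarrow> real^'c \<Rightarrow> real^'p \<Rightarrow> real" where
  "Lagr J G \<rho> z \<mu> s = J z + inner (\<mu> + (\<rho>/2) *\<^sub>R G z s) (G z s)"

text \<open>F(w,s) = (grad J(z) + grad_z G(z,s)^T mu, G(z,s)); note grad_z G^T mu = grad_z (mu^T G).\<close>
definition Fmap :: "(real^'n::finite \<Rightarrow> real) \<Rightarrow> (real^'n \<Rightarrow> real^'p \<Rightarrow> real^'c::finite)
    \<Rightarrow> ((real^'n) \<times> (real^'c)) \<Rightarrow> real^'p \<Rightarrow> ((real^'n) \<times> (real^'c))" where
  "Fmap J G w s = (grad (\<lambda>x. J x + inner (snd w) (G x s)) (fst w), G (fst w) s)"

definition Hmap :: "(real^'n::finite \<Rightarrow> real) \<Rightarrow> (real^'n \<Rightarrow> real^'p \<Rightarrow> real^'c::finite)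
    \<Rightarrow> real \<Rightarrow> real^'c \<Rightarrow> ((real^'n) \<times> (real^'c)) \<Rightarrow> real^'c \<Rightarrow> real^'p \<Rightarrow> ((real^'n) \<times> (real^'c))" where
  "Hmap J G \<rho> \<mu>t w d s =
     (grad (\<lambda>x. J x + inner (snd w) (G x s)) (fst w),
      G (fst w) s + d + (1/\<rho>) *\<^sub>R (\<mu>t - snd w))"

definition KKT :: "(real^'n::finite \<Rightarrow> real) \<Rightarrow> (real^'n \<Rightarrow> real^'p \<Rightarrow> real^'c::finite)
    \<Rightarrow> (real^'n) set \<Rightarrow> ((real^'n) \<times> (real^'c)) \<Rightarrow> real^'p \<Rightarrow> bool" where
  "KKT J G Z w s \<longleftrightarrow> 0 \<in> {Fmap J G w s + v | v. v \<in> normal_cone (Z \<times> UNIV) w}"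

definition HKKT :: "(real^'n::finite \<Rightarrow> real) \<Rightarrow> (real^'n \<Rightarrow> real^'p \<Rightarrow> real^'c::finite)
    \<Rightarrow> (real^'n) set \<Rightarrow> real \<Rightarrow> real^'c \<Rightarrow> ((real^'n) \<times> (real^'c)) \<Rightarrow> real^'c \<Rightarrow> real^'p \<Rightarrow> bool" where
  "HKKT J G Z \<rho> \<mu>t w d s \<longleftrightarrow>
     0 \<in> {Hmap J G \<rho> \<mu>t w d s + v | v. v \<in> normal_cone (Z \<times> UNIV) w}"

text \<open>Projection of a real onto an interval [a,b] (componentwise projection onto a box).\<close>
definition clamp :: "real \<Rightarrow> real \<Rightarrow> real \<Rightarrow> real" where
  "clamp a b x = max a (min b x)"

definition block_trial :: "(real^'n::finite \<Rightarrow> real) \<Rightarrow> ('n \<Rightarrow> nat) \<Rightarrow> real^'n \<Rightarrow> real^'n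
    \<Rightarrow> nat \<Rightarrow> real \<Rightarrow> real^'n \<Rightarrow> real^'n" where
  "block_trial f blk lo hi i c z =
     (\<chi> j. if blk j = i then clamp (lo$j) (hi$j) (z$j - grad f z $ j / c) else z$j)"

text \<open>Backtracking condition for block i (written in the full space: only block i changes,
  so grad f(z_i)^T (u - z_i) = grad f(z) . (u' - z) and |u - z_i| = |u' - z|).\<close>
definition bt_ok :: "(real^'n::finite \<Rightarrow> real) \<Rightarrow> ('n \<Rightarrow> nat) \<Rightarrow> real^'n \<Rightarrow> real^'n
    \<Rightarrow> nat \<Rightarrow> real \<Rightarrow> real \<Rightarrow> real^'n \<Rightarrow> bool" where
  "bt_ok f blk lo hi i \<alpha> c z \<longleftrightarrow>
     (let u = block_trial f blk lo hi i c z in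
      f u + \<alpha>/2 * (norm (u - z))\<^sup>2 \<le> f z + inner (grad f z) (u - z) + c/2 * (norm (u - z))\<^sup>2)"

definition block_step :: "(real^'n::finite \<Rightarrow> real) \<Rightarrow> ('n \<Rightarrow> nat) \<Rightarrow> real^'n \<Rightarrow> real^'n
    \<Rightarrow> (nat \<Rightarrow> real) \<Rightarrow> (nat \<Rightarrow> real) \<Rightarrow> real \<Rightarrow> nat \<Rightarrow> real^'n \<Rightarrow> real^'n" where
  "block_step f blk lo hi c0 \<alpha> \<beta> i z =
     (let t = (LEAST t::nat. bt_ok f blk lo hi i (\<alpha> i) (c0 i * \<beta> ^ t) z)
      in block_trial f blk lo hi i (c0 i * \<beta> ^ t) z)"

definition sweep :: "nat \<Rightarrow> (real^'n::finite \<Rightarrow> real) \<Rightarrow> ('n \<Rightarrow> nat) \<Rightarrow> real^'n \<Rightarrow> real^'n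
    \<Rightarrow> (nat \<Rightarrow> real) \<Rightarrow> (nat \<Rightarrow> real) \<Rightarrow> real \<Rightarrow> real^'n \<Rightarrow> real^'n" where
  "sweep P f blk lo hi c0 \<alpha> \<beta> z = fold (block_step f blk lo hi c0 \<alpha> \<beta>) [0..<P] z"

end

theory Submission
  imports Defs
begin

(*
  One step of the tracking scheme is analysed around the perturbed KKT system H = 0 of
  hypothesis (B).  The KKT point w*_k solves that system for the data (d,s) = (0,s_k), and
  w^inf_k solves it for (d_k,s_{k+1}); the Lipschitz stability of (B) combined with the
  Lipschitz continuity of H in (d,s) therefore places w^inf_k within
  lamB lamH (|d_k| + |s_{k+1}-s_k|) of w*_k, where |d_k| <= |wbar_k - w*_k| / rho.
  By the triangle inequality the primal start zbar_k is then within the quantity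
  X = lamB lamH |s_{k+1}-s_k| + (1 + lamB lamH/rho) |wbar_k - w*_k| of z^inf_k, and the
  hypothesis of the theorem makes X < delta, so the sweep rate of (C) applies to the
  primal error.  Finally the multiplier update is Lipschitz in the primal iterate with
  constant rho lamG, which turns the primal bound into the stated bound on the full error.
*)

lemma KKT_imp_HKKT_zero:
  assumes "KKT J G Z w s"
  shows "HKKT J G Z \<rho> (snd w) w 0 s"
  using assms unfolding HKKT_def KKT_def Hmap_def Fmap_def by simp

text \<open>Solutions of the perturbed system are primal feasible: the normal cone is empty
  outside the feasible set.\<close>
lemma HKKT_primal_feasible:
  assumes "HKKT J G Z \<rho> \<mu>t w d s"
  shows "fst w \<in> Z"
proof -
  have "w \<in> Z \<times> UNIV"
    using assms unfolding HKKT_def normal_cone_def by (auto split: if_splits)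
  then show ?thesis by auto
qed

lemma perturbed_solution_sensitivity:
  assumes H_lip: "\<And>\<mu>t w dd ss dd' ss'. norm (Hmap J G \<rho> \<mu>t w dd ss - Hmap J G \<rho> \<mu>t w dd' ss')
                   \<le> lamH * norm ((dd, ss) - (dd', ss'))"
    and stable: "norm (w - w0) \<le> lamB * norm (Hmap J G \<rho> \<mu>t w0 d s - Hmap J G \<rho> \<mu>t w0 d0 s0)"
    and "lamH \<ge> 0" "lamB \<ge> 0"
  shows "norm (w - w0) \<le> lamB * lamH * (norm (d - d0) + norm (s - s0))"
proof -
  have "norm (Hmap J G \<rho> \<mu>t w0 d s - Hmap J G \<rho> \<mu>t w0 d0 s0) \<le> lamH * norm ((d, s) - (d0, s0))"
    by (rule H_lip)
  also have "\<dots> \<le> lamH * (norm (d - d0) + norm (s - s0))"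
    using norm_Pair_le[of "d - d0" "s - s0"] \<open>lamH \<ge> 0\<close> by (intro mult_left_mono) simp_all
  finally have residual: "norm (Hmap J G \<rho> \<mu>t w0 d s - Hmap J G \<rho> \<mu>t w0 d0 s0)
                            \<le> lamH * (norm (d - d0) + norm (s - s0))" .
  have "norm (w - w0) \<le> lamB * (lamH * (norm (d - d0) + norm (s - s0)))"
    using stable mult_left_mono[OF residual \<open>lamB \<ge> 0\<close>] by linarith
  then show ?thesis by (simp only: mult.assoc)
qed

lemma perturbed_solution_near_KKT:
  assumes H_lip: "\<And>\<mu>t w dd ss dd' ss'. norm (Hmap J G \<rho> \<mu>t w dd ss - Hmap J G \<rho> \<mu>t w dd' ss')
                   \<le> lamH * norm ((dd, ss) - (dd', ss'))"
    and KKT: "KKT J G Z w0 s0" and "r > 0"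
    and unique: "\<forall>w\<in>ball w0 r. HKKT J G Z \<rho> (snd w0) w 0 s0 \<longrightarrow> w = sol 0 s0"
    and stable: "norm (sol d s - sol 0 s0)
                   \<le> lamB * norm (Hmap J G \<rho> (snd w0) (sol 0 s0) d s - Hmap J G \<rho> (snd w0) (sol 0 s0) 0 s0)"
    and "lamH \<ge> 0" "lamB \<ge> 0"
  shows "norm (sol d s - w0) \<le> lamB * lamH * (norm d + norm (s - s0))"
proof -
  have "w0 = sol 0 s0"
    using unique KKT_imp_HKKT_zero[OF KKT] \<open>r > 0\<close> by simp
  then show ?thesis
    using perturbed_solution_sensitivity[OF H_lip stable] \<open>lamH \<ge> 0\<close> \<open>lamB \<ge> 0\<close> by simp
qed

lemma scaled_multiplier_gap:
  fixes a b :: "'a::real_normed_vector \<times> 'b::real_normed_vector"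
  assumes "\<rho> > 0"
  shows "norm ((1/\<rho>) *\<^sub>R (snd a - snd b)) \<le> norm (a - b) / \<rho>"
proof -
  have "norm (snd a - snd b) \<le> norm (a - b)"
    using norm_snd_le[of "snd (a - b)" "fst (a - b)", unfolded prod.collapse] by simp
  then show ?thesis using assms by (simp add: divide_right_mono)
qed

lemma primal_distance_via:
  fixes a b c :: "'a::real_normed_vector \<times> 'b::real_normed_vector"
  shows "norm (fst a - fst b) \<le> norm (a - c) + norm (b - c)"
proof -
  have "norm (fst a - fst b) \<le> norm (fst a - fst c) + norm (fst b - fst c)"
    using norm_triangle_ineq4[of "fst a - fst c" "fst b - fst c"] by simp
  also have "\<dots> \<le> norm (a - c) + norm (b - c)"
    using norm_fst_le[of "fst (a - c)" "snd (a - c)", unfolded prod.collapse]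
      norm_fst_le[of "fst (b - c)" "snd (b - c)", unfolded prod.collapse]
    by (simp add: add_mono)
  finally show ?thesis .
qed

lemma multiplier_update_error:
  fixes G :: "'a::real_normed_vector \<Rightarrow> 'b::real_normed_vector"
  assumes "\<rho> \<ge> 0" "z \<in> Z" "z' \<in> Z"
    and G_lip: "\<forall>x\<in>Z. \<forall>y\<in>Z. norm (G x - G y) \<le> lamG * norm (x - y)"
  shows "norm ((z, \<mu> + \<rho> *\<^sub>R G z) - (z', \<mu> + \<rho> *\<^sub>R G z')) \<le> (1 + \<rho> * lamG) * norm (z - z')"
proof -
  have "(z, \<mu> + \<rho> *\<^sub>R G z) - (z', \<mu> + \<rho> *\<^sub>R G z') = (z - z', \<rho> *\<^sub>R (G z - G z'))"
    by (simp add: algebra_simps)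
  then have "norm ((z, \<mu> + \<rho> *\<^sub>R G z) - (z', \<mu> + \<rho> *\<^sub>R G z'))
               \<le> norm (z - z') + \<rho> * norm (G z - G z')"
    using norm_Pair_le[of "z - z'" "\<rho> *\<^sub>R (G z - G z')"] \<open>\<rho> \<ge> 0\<close> by simp
  also have "\<dots> \<le> norm (z - z') + \<rho> * (lamG * norm (z - z'))"
    using G_lip \<open>z \<in> Z\<close> \<open>z' \<in> Z\<close> \<open>\<rho> \<ge> 0\<close> by (intro add_left_mono mult_left_mono) auto
  finally show ?thesis by (simp add: algebra_simps)
qed

theorem mainTheorem9:
  fixes P :: nat
    and blk :: "'n::finite \<Rightarrow> nat" and cblk :: "'c::finite \<Rightarrow> nat"
    and lo hi :: "real^'n"
    and Jb :: "nat \<Rightarrow> real^'n \<Rightarrow> real" and J :: "real^'n \<Rightarrow> real"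
    and Qc :: "real^'n \<Rightarrow> real^'c" and gb :: "nat \<Rightarrow> real^'n \<Rightarrow> real^'c"
    and T :: "nat \<Rightarrow> real^'p::finite^'c"
    and G :: "real^'n \<Rightarrow> real^'p \<Rightarrow> real^'c"
    and S :: "(real^'p) set"
    and c0 \<alpha> :: "nat \<Rightarrow> real" and \<beta> \<rho> :: real and M :: nat
    and s :: "nat \<Rightarrow> real^'p"
    and ws wbar winf :: "nat \<Rightarrow> (real^'n) \<times> (real^'c)"
    and zinf :: "nat \<Rightarrow> real^'n" and d :: "nat \<Rightarrow> real^'c"
    and L :: "nat \<Rightarrow> real^'n \<Rightarrow> real"
    and lamH lamG :: real
    and rA \<delta>A lamA :: real and wA :: "nat \<Rightarrow> real^'p \<Rightarrow> (real^'n) \<times> (real^'c)"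
    and rB qB lamB \<delta>B :: real and wB :: "nat \<Rightarrow> real^'c \<Rightarrow> real^'p \<Rightarrow> (real^'n) \<times> (real^'c)"
    and C \<delta> \<psi> :: real
    and k :: nat
  assumes
    \<comment> \<open>problem data\<close>
    P_pos: "P \<ge> 1"
    and blk_range: "\<forall>j. blk j < P" and blk_nonempty: "\<forall>i<P. \<exists>j. blk j = i"
    and cblk_range: "\<forall>c. cblk c \<le> P"
    and box_nonempty: "\<forall>j. lo$j \<le> hi$j"
    and J_poly: "\<forall>i<P. polynomial_function (Jb i)"
    and J_def: "\<forall>z. J z = (\<Sum>i<P. Jb i (blockproj blk i z))"
    and Qc_poly: "polynomial_function Qc"
    and g_poly: "\<forall>i<P. polynomial_function (gb i)"
    and G_def: "G = Gmap Qc gb T blk cblk"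
    \<comment> \<open>Lipschitz constants lambda_H and lambda_G\<close>
    and lamH_pos: "lamH > 0"
    and lamH_lip: "\<forall>\<mu>t w dd ss dd' ss'. norm (Hmap J G \<rho> \<mu>t w dd ss - Hmap J G \<rho> \<mu>t w dd' ss')
                   \<le> lamH * norm ((dd, ss) - (dd', ss'))"
    and lamG_pos: "lamG > 0"
    and lamG_lip: "\<forall>ss. \<forall>z\<in>cbox lo hi. \<forall>z'\<in>cbox lo hi. norm (G z ss - G z' ss) \<le> lamG * norm (z - z')"
    \<comment> \<open>primal sweep parameters\<close>
    and c0_pos: "\<forall>i. c0 i > 0" and \<alpha>_pos: "\<forall>i. \<alpha> i > 0" and \<beta>_gt1: "\<beta> > 1"
    \<comment> \<open>tracking setting\<close>
    and \<rho>_pos: "\<rho> > 0" and M_ge1: "M \<ge> 1"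
    and s_in_S: "\<forall>k. s k \<in> S"
    and ws_KKT: "\<forall>k. KKT J G (cbox lo hi) (ws k) (s k)"
    and zbar_in: "\<forall>k. fst (wbar k) \<in> cbox lo hi"
    and L_def: "\<forall>k. L k = (\<lambda>z. Lagr J G \<rho> z (snd (wbar k)) (s (Suc k)))"
    and zbar_step: "\<forall>k. fst (wbar (Suc k)) = (sweep P (L k) blk lo hi c0 \<alpha> \<beta> ^^ M) (fst (wbar k))"
    and mubar_step: "\<forall>k. snd (wbar (Suc k)) = snd (wbar k) + \<rho> *\<^sub>R G (fst (wbar (Suc k))) (s (Suc k))"
    and zinf_def: "\<forall>k. zinf k = lim (\<lambda>n. (sweep P (L k) blk lo hi c0 \<alpha> \<beta> ^^ n) (fst (wbar k)))"
    and winf_def: "\<forall>k. winf k = (zinf k, snd (wbar k) + \<rho> *\<^sub>R G (zinf k) (s (Suc k)))"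
    and d_def: "\<forall>k. d k = (1/\<rho>) *\<^sub>R (snd (wbar k) - snd (ws k))"
    \<comment> \<open>hypothesis (A)\<close>
    and A_pos: "rA > 0" "\<delta>A > 0" "lamA > 0"
    and A_sol: "\<forall>k. \<forall>ss\<in>ball (s k) rA \<inter> S.
                  wA k ss \<in> ball (ws k) \<delta>A \<and> KKT J G (cbox lo hi) (wA k ss) ss \<and>
                  (\<forall>w\<in>ball (ws k) \<delta>A. KKT J G (cbox lo hi) w ss \<longrightarrow> w = wA k ss)"
    and A_lip: "\<forall>k. \<forall>ss\<in>ball (s k) rA \<inter> S. \<forall>ss'\<in>ball (s k) rA \<inter> S.
                  norm (wA k ss - wA k ss')
                    \<le> lamA * norm (Fmap J G (wA k ss') ss - Fmap J G (wA k ss') ss')"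
    and A_next: "\<forall>k. norm (s (Suc k) - s k) < rA \<longrightarrow> ws (Suc k) = wA k (s (Suc k))"
    \<comment> \<open>hypothesis (B)\<close>
    and B_pos: "rB > 0" "qB > 0" "lamB > 0" and B_\<delta>: "\<delta>B \<ge> \<delta>A"
    and B_sol: "\<forall>k. \<forall>dd\<in>ball 0 qB. \<forall>ss\<in>ball (s k) rB \<inter> S.
                  wB k dd ss \<in> ball (ws k) \<delta>B \<and> HKKT J G (cbox lo hi) \<rho> (snd (ws k)) (wB k dd ss) dd ss \<and>
                  (\<forall>w\<in>ball (ws k) \<delta>B. HKKT J G (cbox lo hi) \<rho> (snd (ws k)) w dd ss \<longrightarrow> w = wB k dd ss)"
    and B_lip: "\<forall>k. \<forall>dd\<in>ball 0 qB. \<forall>dd'\<in>ball 0 qB. \<forall>ss\<in>ball (s k) rB \<inter> S. \<forall>ss'\<in>ball (s k) rB \<inter> S.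
                  norm (wB k dd ss - wB k dd' ss')
                    \<le> lamB * norm (Hmap J G \<rho> (snd (ws k)) (wB k dd' ss') dd ss
                                 - Hmap J G \<rho> (snd (ws k)) (wB k dd' ss') dd' ss')"
    \<comment> \<open>hypothesis (C)\<close>
    and C_pos: "C > 0" "\<delta> > 0" "\<psi> > 0"
    and C_conv: "\<forall>k. convergent (\<lambda>n. (sweep P (L k) blk lo hi c0 \<alpha> \<beta> ^^ n) (fst (wbar k)))"
    and C_limit: "\<forall>k. d k \<in> ball 0 qB \<and> norm (s (Suc k) - s k) < rB \<longrightarrow> winf k = wB k (d k) (s (Suc k))"
    and C_rate: "\<forall>k. norm (fst (wbar k) - zinf k) < \<delta> \<longrightarrow>
                  norm (fst (wbar (Suc k)) - zinf k) \<le> C * real M powr (- \<psi>) * norm (fst (wbar k) - zinf k)"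
    \<comment> \<open>hypotheses of the theorem\<close>
    and h1: "norm (s (Suc k) - s k) < rB"
    and h2: "norm (wbar k - ws k) < qB * \<rho>"
    and h3: "(1 + lamH * lamB / \<rho>) * norm (wbar k - ws k) + lamH * lamB * rB < \<delta>"
  shows "norm (wbar (Suc k) - winf k)
           \<le> C * (1 + \<rho> * lamG) * real M powr (- \<psi>)
              * (lamB * lamH * norm (s (Suc k) - s k) + (1 + lamB * lamH / \<rho>) * norm (wbar k - ws k))"
proof -
  define e where "e = norm (wbar k - ws k)"
  define X where "X = lamB * lamH * norm (s (Suc k) - s k) + (1 + lamB * lamH / \<rho>) * e"
  have d_small: "norm (d k) \<le> e / \<rho>" "e / \<rho> < qB"
    using scaled_multiplier_gap[OF \<rho>_pos, of "wbar k" "ws k"] d_def h2 \<rho>_pos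
    by (simp_all add: e_def divide_less_eq mult.commute)
  have data: "d k \<in> ball 0 qB" "0 \<in> ball (0::real^'c) qB"
             "s (Suc k) \<in> ball (s k) rB \<inter> S" "s k \<in> ball (s k) rB \<inter> S"
    using d_small h1 s_in_S B_pos by (auto simp: dist_norm norm_minus_commute)
  \<comment> \<open>w*_k and w^inf_k are the perturbed solutions for the data (0,s_k) and (d_k,s_{k+1}).\<close>
  have winf_B: "winf k = wB k (d k) (s (Suc k))" using C_limit data h1 by blast
  have "\<forall>w\<in>ball (ws k) \<delta>B. HKKT J G (cbox lo hi) \<rho> (snd (ws k)) w 0 (s k) \<longrightarrow> w = wB k 0 (s k)"
    using B_sol data(2,4) by blast
  then have "norm (winf k - ws k) \<le> lamB * lamH * (norm (d k) + norm (s (Suc k) - s k))"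
    unfolding winf_B
    using perturbed_solution_near_KKT[OF lamH_lip[rule_format] ws_KKT[rule_format], of "\<delta>B"]
      B_lip[rule_format, OF data] A_pos B_\<delta> lamH_pos B_pos by simp
  also have "\<dots> \<le> lamB * lamH * (e / \<rho> + norm (s (Suc k) - s k))"
    using d_small B_pos lamH_pos by (intro mult_left_mono) simp_all
  finally have "norm (fst (wbar k) - zinf k) \<le> e + lamB * lamH * (e / \<rho> + norm (s (Suc k) - s k))"
    using primal_distance_via[of "wbar k" "winf k" "ws k"] winf_def unfolding e_def by simp
  then have start: "norm (fst (wbar k) - zinf k) \<le> X"
    unfolding X_def by (simp add: algebra_simps)
  \<comment> \<open>The start lies in the contraction region of (C).\<close>
  have "lamB * lamH * norm (s (Suc k) - s k) < lamH * lamB * rB"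
    using h1 B_pos lamH_pos by (simp add: mult.commute)
  then have "X < \<delta>"
    using h3 unfolding X_def e_def by (simp add: mult.commute)
  with start have "norm (fst (wbar (Suc k)) - zinf k) \<le> C * real M powr (- \<psi>) * norm (fst (wbar k) - zinf k)"
    using C_rate by simp
  also have "\<dots> \<le> C * real M powr (- \<psi>) * X"
    using start C_pos by (intro mult_left_mono) simp_all
  finally have rate: "norm (fst (wbar (Suc k)) - zinf k) \<le> C * real M powr (- \<psi>) * X" .
  \<comment> \<open>Transfer the primal rate to the primal-dual error through the multiplier update.\<close>
  have "HKKT J G (cbox lo hi) \<rho> (snd (ws k)) (winf k) (d k) (s (Suc k))"
    using B_sol data(1,3) unfolding winf_B by blast
  then have "zinf k \<in> cbox lo hi"
    using HKKT_primal_feasible winf_def by fastforce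
  moreover have "\<forall>x\<in>cbox lo hi. \<forall>y\<in>cbox lo hi.
                  norm (G x (s (Suc k)) - G y (s (Suc k))) \<le> lamG * norm (x - y)"
    using lamG_lip by blast
  moreover have "wbar (Suc k) - winf k
      = (fst (wbar (Suc k)), snd (wbar k) + \<rho> *\<^sub>R G (fst (wbar (Suc k))) (s (Suc k)))
        - (zinf k, snd (wbar k) + \<rho> *\<^sub>R G (zinf k) (s (Suc k)))"
    using mubar_step winf_def by (simp add: prod_eq_iff)
  ultimately have "norm (wbar (Suc k) - winf k) \<le> (1 + \<rho> * lamG) * norm (fst (wbar (Suc k)) - zinf k)"
    using multiplier_update_error[OF less_imp_le[OF \<rho>_pos] zbar_in[rule_format, of "Suc k"],
        of "zinf k" "\<lambda>z. G z (s (Suc k))" lamG "snd (wbar k)"] by simp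
  also have "\<dots> \<le> (1 + \<rho> * lamG) * (C * real M powr (- \<psi>) * X)"
    using rate \<rho>_pos lamG_pos by (intro mult_left_mono) auto
  also have "\<dots> = C * (1 + \<rho> * lamG) * real M powr (- \<psi>) * X"
    by (simp only: mult_ac)
  finally show ?thesis unfolding X_def e_def .
qed

end
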